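(* Assume Evidential Independence. Then for every evidence partition $\mathcal{E}$ (and choice set $\mathcal{S}$ with a unique post-learning optimal action in each state), $\mathrm{Val}_{General}(\mathcal{E})\le \mathrm{Val}_{Good}(\mathcal{E})$.
   Context: Standing setup: $\Omega$ is a finite set of states; $p$ is a probability function on $\Omega$; $u:\mathscr{O}\to\mathbb{R}$ a utility function on outcomes; actions are functions $f:\Omega\to\mathscr{O}$; for a probability $q$, $\mathbb{E}_q(f)=\sum_{\omega} q(\{\omega\})u(f(\omega))$. $\mathcal{S}$ is a finite choice set of actions; $\mathcal{E}$ is a partition of $\Omega$ with $p(E)>0$ for all $E\in\mathcal{E}$, and $p(\cdot\mid E)$ is ratio conditional probability. An update rule assigns to each $E\in\mathcal{E}$ a map $\mathcal{P}_E:E\to\Delta(\Omega)$ (probability functions on $\Omega$) with $\mathcal{P}_E(\omega)(E)=1$; $\mathcal{P}_{\mathcal{E}}(\omega)=\mathcal{P}_E(\omega)$ for $\omega\in E$. Standing assumption: for each $\omega$ there is a unique $f^*_\omega\in\mathcal{S}$ maximizing $\mathbb{E}_{\mathcal{P}_{\mathcal{E}}(\omega)}(\cdot)$ over $\mathcal{S}$. Definitions: $\mathrm{Val}_{Good}(\mathcal{E})=\sum_{E\in\mathcal{E}}p(E)\max_{f\in\mathcal{S}}\mathbb{E}_{p(\cdot\mid E)}(f)-\max_{f\in\mathcal{S}}\mathbb{E}_p(f)$; $\mathrm{Val}_{General}(\mathcal{E})=\sum_{\omega\in\Omega}p(\{\omega\})u(f^*_\omega(\omega))-\max_{f\in\mathcal{S}}\mathbb{E}_p(f)$.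 Evidential Independence: for every $E\in\mathcal{E}$, every $f\in\mathcal{S}$ and every $g\in\mathcal{S}$ with $p(C_g)>0$ where $C_g=\{\omega\in E: f^*_\omega=g\}$, one has $\mathbb{E}_{p(\cdot\mid C_g)}(f)=\mathbb{E}_{p(\cdot\mid E)}(f)$. *)

theory Defs
  imports Main "HOL-Library.Extended_Real"
begin

definition is_prob :: "('w::finite \<Rightarrow> real) \<Rightarrow> bool" where
  "is_prob q \<longleftrightarrow> (\<forall>w. 0 \<le> q w) \<and> (\<Sum>w\<in>UNIV. q w) = 1"

definition Pr :: "('w \<Rightarrow> real) \<Rightarrow> 'w set \<Rightarrow> real" where
  "Pr q A = (\<Sum>w\<in>A. q w)"

definition Exp :: "('w::finite \<Rightarrow> real) \<Rightarrow> ('o \<Rightarrow> real) \<Rightarrow> ('w \<Rightarrow> 'o) \<Rightarrow> real" where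
  "Exp q u f = (\<Sum>w\<in>UNIV. q w * u (f w))"

definition cond :: "('w \<Rightarrow> real) \<Rightarrow> 'w set \<Rightarrow> ('w \<Rightarrow> real)" where
  "cond p A = (\<lambda>w. if w \<in> A then p w / Pr p A else 0)"

definition is_partition :: "'w set set \<Rightarrow> bool" where
  "is_partition Es \<longleftrightarrow> (\<forall>E\<in>Es. E \<noteq> {}) \<and> \<Union>Es = UNIV \<and>
     (\<forall>E\<in>Es. \<forall>F\<in>Es. E \<noteq> F \<longrightarrow> E \<inter> F = {})"

definition cell :: "'w set set \<Rightarrow> 'w \<Rightarrow> 'w set" where
  "cell Es w = (THE E. E \<in> Es \<and> w \<in> E)"

(* update rule: P E w is the posterior P_E(w); P_{\<E>}(w) = P_E(w) for w \<in> E *)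
definition is_update_rule :: "'w set set \<Rightarrow> ('w set \<Rightarrow> 'w \<Rightarrow> ('w::finite \<Rightarrow> real)) \<Rightarrow> bool" where
  "is_update_rule Es P \<longleftrightarrow> (\<forall>E\<in>Es. \<forall>w\<in>E. is_prob (P E w) \<and> Pr (P E w) E = 1)"

definition PEs :: "'w set set \<Rightarrow> ('w set \<Rightarrow> 'w \<Rightarrow> ('w \<Rightarrow> real)) \<Rightarrow> 'w \<Rightarrow> ('w \<Rightarrow> real)" where
  "PEs Es P w = P (cell Es w) w"

definition is_opt :: "('w::finite \<Rightarrow> real) \<Rightarrow> ('o \<Rightarrow> real) \<Rightarrow> ('w \<Rightarrow> 'o) set \<Rightarrow> ('w \<Rightarrow> 'o) \<Rightarrow> bool" where
  "is_opt q u S f \<longleftrightarrow> f \<in> S \<and> (\<forall>g\<in>S. Exp q u g \<le> Exp q u f)"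

definition unique_opt :: "'w set set \<Rightarrow> ('w set \<Rightarrow> 'w \<Rightarrow> ('w::finite \<Rightarrow> real)) \<Rightarrow> ('o \<Rightarrow> real) \<Rightarrow> ('w \<Rightarrow> 'o) set \<Rightarrow> bool" where
  "unique_opt Es P u S \<longleftrightarrow> (\<forall>w. \<exists>!f. is_opt (PEs Es P w) u S f)"

definition fstar :: "'w set set \<Rightarrow> ('w set \<Rightarrow> 'w \<Rightarrow> ('w::finite \<Rightarrow> real)) \<Rightarrow> ('o \<Rightarrow> real) \<Rightarrow> ('w \<Rightarrow> 'o) set \<Rightarrow> 'w \<Rightarrow> ('w \<Rightarrow> 'o)" where
  "fstar Es P u S w = (THE f. is_opt (PEs Es P w) u S f)"

definition Val_Good :: "('w::finite \<Rightarrow> real) \<Rightarrow> ('o \<Rightarrow> real) \<Rightarrow> ('w \<Rightarrow> 'o) set \<Rightarrow> 'w set set \<Rightarrow> real" where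
  "Val_Good p u S Es = (\<Sum>E\<in>Es. Pr p E * Max ((\<lambda>f. Exp (cond p E) u f) ` S))
                        - Max ((\<lambda>f. Exp p u f) ` S)"

definition Val_General :: "('w::finite \<Rightarrow> real) \<Rightarrow> ('o \<Rightarrow> real) \<Rightarrow> ('w \<Rightarrow> 'o) set \<Rightarrow> 'w set set
      \<Rightarrow> ('w set \<Rightarrow> 'w \<Rightarrow> ('w \<Rightarrow> real)) \<Rightarrow> real" where
  "Val_General p u S Es P = (\<Sum>w\<in>UNIV. p w * u (fstar Es P u S w w)) - Max ((\<lambda>f. Exp p u f) ` S)"

definition evidential_independence :: "('w::finite \<Rightarrow> real) \<Rightarrow> ('o \<Rightarrow> real) \<Rightarrow> ('w \<Rightarrow> 'o) set \<Rightarrow> 'w set set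
      \<Rightarrow> ('w set \<Rightarrow> 'w \<Rightarrow> ('w \<Rightarrow> real)) \<Rightarrow> bool" where
  "evidential_independence p u S Es P \<longleftrightarrow>
     (\<forall>E\<in>Es. \<forall>f\<in>S. \<forall>g\<in>S.
        let C = {w\<in>E. fstar Es P u S w = g} in
        Pr p C > 0 \<longrightarrow> Exp (cond p C) u f = Exp (cond p E) u f)"

end

theory Submission
  imports Defs
begin

text \<open>Group the states of a cell \<open>E\<close> by the action \<open>g\<close> chosen there after learning.
  On the group \<open>C\<^sub>g\<close> the realised utility is \<open>p(C\<^sub>g)\<close> times the expectation of \<open>g\<close>
  under \<open>p(\<cdot>|C\<^sub>g)\<close>, which by evidential independence equals its expectation under
  \<open>p(\<cdot>|E)\<close> and hence is at most the best conditional expectation on \<open>E\<close>. Summing over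
  the groups of a cell and then over the cells gives the value of good learning.\<close>

lemma Pr_nonneg:
  assumes "\<And>w. 0 \<le> p w"
  shows "0 \<le> Pr p A"
  unfolding Pr_def using assms by (simp add: sum_nonneg)

lemma sum_eq_0_if_Pr_eq_0:
  fixes p :: "'w::finite \<Rightarrow> real"
  assumes "\<And>w. 0 \<le> p w" and "Pr p C = 0"
  shows "(\<Sum>w\<in>C. p w * x w) = 0"
proof -
  have "\<forall>w\<in>C. p w = 0"
    using assms sum_nonneg_eq_0_iff[of C p] unfolding Pr_def by auto
  then show ?thesis by simp
qed

lemma sum_eq_Pr_mult_Exp_cond:
  fixes p :: "'w::finite \<Rightarrow> real"
  assumes "Pr p C \<noteq> 0"
  shows "(\<Sum>w\<in>C. p w * u (g w)) = Pr p C * Exp (cond p C) u g"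
proof -
  have "Exp (cond p C) u g = (\<Sum>w\<in>UNIV. if w \<in> C then p w * u (g w) / Pr p C else 0)"
    unfolding Exp_def cond_def by (rule sum.cong) auto
  also have "\<dots> = (\<Sum>w\<in>C. p w * u (g w)) / Pr p C"
    by (simp add: sum.If_cases sum_divide_distrib)
  finally show ?thesis using assms by simp
qed

lemma sum_choice_le_Pr_mult:
  fixes p :: "'w::finite \<Rightarrow> real" and F :: "'w \<Rightarrow> 'w \<Rightarrow> 'o"
  assumes p_nonneg: "\<And>w. 0 \<le> p w"
    and group_bound: "\<And>g. g \<in> F ` E \<Longrightarrow> Pr p {w\<in>E. F w = g} > 0 \<Longrightarrow>
                           Exp (cond p {w\<in>E. F w = g}) u g \<le> M"
  shows "(\<Sum>w\<in>E. p w * u (F w w)) \<le> Pr p E * M"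
proof -
  have "(\<Sum>w\<in>E. p w * u (F w w)) = (\<Sum>g\<in>F ` E. \<Sum>w\<in>{x\<in>E. F x = g}. p w * u (g w))"
    by (subst sum.image_gen[of E _ F]) (auto intro!: sum.cong)
  also have "\<dots> \<le> (\<Sum>g\<in>F ` E. Pr p {x\<in>E. F x = g} * M)"
  proof (rule sum_mono)
    fix g assume g: "g \<in> F ` E"
    define C where "C = {x\<in>E. F x = g}"
    show "(\<Sum>w\<in>C. p w * u (g w)) \<le> Pr p C * M"
    proof (cases "Pr p C > 0")
      case True
      then have "(\<Sum>w\<in>C. p w * u (g w)) = Pr p C * Exp (cond p C) u g"
        by (intro sum_eq_Pr_mult_Exp_cond) simp
      also have "\<dots> \<le> Pr p C * M"
        using True group_bound[OF g] unfolding C_def by (simp add: mult_left_mono)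
      finally show ?thesis .
    next
      case False
      then have "Pr p C = 0" using Pr_nonneg[of p C] p_nonneg by (simp add: order_le_less)
      then show ?thesis using sum_eq_0_if_Pr_eq_0[of p C] p_nonneg by simp
    qed
  qed
  also have "\<dots> = Pr p E * M"
    unfolding Pr_def sum_distrib_right[symmetric] by (simp flip: sum.image_gen)
  finally show ?thesis .
qed

lemma sum_UNIV_partition:
  fixes h :: "'w::finite \<Rightarrow> real"
  assumes "is_partition Es"
  shows "(\<Sum>w\<in>UNIV. h w) = (\<Sum>E\<in>Es. \<Sum>w\<in>E. h w)"
proof -
  have "finite Es" by (rule finite_subset[of _ "Pow UNIV"]) auto
  then show ?thesis
    using assms sum.Union_disjoint[of Es h] unfolding is_partition_def by auto
qed

lemma fstar_in_choice_set:
  assumes "unique_opt Es P u S"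
  shows "fstar Es P u S w \<in> S"
proof -
  have "\<exists>!f. is_opt (PEs Es P w) u S f"
    using assms unfolding unique_opt_def by simp
  then have "is_opt (PEs Es P w) u S (fstar Es P u S w)"
    unfolding fstar_def by (rule theI')
  then show ?thesis unfolding is_opt_def by simp
qed

theorem theorem3:
  fixes p :: "'w::finite \<Rightarrow> real" and u :: "'o \<Rightarrow> real"
    and S :: "('w \<Rightarrow> 'o) set" and Es :: "'w set set"
    and P :: "'w set \<Rightarrow> 'w \<Rightarrow> ('w \<Rightarrow> real)"
  assumes "is_prob p"
    and "finite S" and "S \<noteq> {}"
    and "is_partition Es" and "\<forall>E\<in>Es. Pr p E > 0"
    and "is_update_rule Es P"
    and "unique_opt Es P u S"
    and "evidential_independence p u S Es P"
  shows "Val_General p u S Es P \<le> Val_Good p u S Es"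
proof -
  define F where "F = fstar Es P u S"
  define M where "M E = Max ((\<lambda>f. Exp (cond p E) u f) ` S)" for E
  have p_nonneg: "\<And>w. 0 \<le> p w" using \<open>is_prob p\<close> unfolding is_prob_def by simp
  have cell_bound: "(\<Sum>w\<in>E. p w * u (F w w)) \<le> Pr p E * M E" if "E \<in> Es" for E
  proof -
    have "Exp (cond p {w\<in>E. F w = g}) u g \<le> M E"
      if "g \<in> F ` E" and C_nonnull: "Pr p {w\<in>E. F w = g} > 0" for g
    proof -
      have "g \<in> S"
        using that fstar_in_choice_set[OF \<open>unique_opt Es P u S\<close>] unfolding F_def by auto
      then have "Exp (cond p {w\<in>E. F w = g}) u g = Exp (cond p E) u g"
        using \<open>evidential_independence p u S Es P\<close> \<open>E \<in> Es\<close> C_nonnull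
        unfolding evidential_independence_def F_def Let_def by blast
      also have "\<dots> \<le> M E"
        unfolding M_def using \<open>finite S\<close> \<open>g \<in> S\<close> by (intro Max_ge) auto
      finally show ?thesis .
    qed
    then show ?thesis using sum_choice_le_Pr_mult[of p F E u "M E"] p_nonneg by blast
  qed
  have "(\<Sum>w\<in>UNIV. p w * u (F w w)) \<le> (\<Sum>E\<in>Es. Pr p E * M E)"
    unfolding sum_UNIV_partition[OF \<open>is_partition Es\<close>] by (rule sum_mono) (rule cell_bound)
  then show ?thesis unfolding Val_General_def Val_Good_def M_def F_def by simp
qed

end
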